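(* Let $G$ be a graph and ${\cal P}=\{{\cal P}(v)\colon v\in V_G\}$ a family where each ${\cal P}(v)$ is a partition of $N_G(v)$. Then $\gamma(G\circ{\cal P})=|V_G|$.
   Context: All graphs are finite and simple. A set $D\subseteq V_G$ is a dominating set of $G$ if every vertex of $V_G-D$ has a neighbor in $D$; $\gamma(G)$ is the minimum cardinality of a dominating set. For a graph $G$ and a family ${\cal P}=\{{\cal P}(v)\colon v\in V_G\}$, where ${\cal P}(v)$ is a partition of $N_G(v)$ into nonempty blocks, the ${\cal P}$-corona $G\circ{\cal P}$ is the graph with vertex set $\{(v,1)\colon v\in V_G\}\cup\bigcup_{v\in V_G}\{(v,A)\colon A\in{\cal P}(v)\}$ and edge set $\bigcup_{v\in V_G}\{(v,1)(v,A)\colon A\in{\cal P}(v)\}\cup\bigcup_{uv\in E_G}\{(v,A)(u,B)\colon u\in A,\ v\in B\}$ (here $A\in{\cal P}(v)$, $B\in{\cal P}(u)$). *)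

theory Defs
  imports Main
begin

definition simple_graph :: "'a set \<Rightarrow> ('a \<Rightarrow> 'a \<Rightarrow> bool) \<Rightarrow> bool" where
  "simple_graph V E \<longleftrightarrow> finite V \<and> (\<forall>u v. E u v \<longrightarrow> u \<in> V \<and> v \<in> V)
     \<and> (\<forall>u v. E u v \<longrightarrow> E v u) \<and> (\<forall>v. \<not> E v v)"

definition nbhd :: "'a set \<Rightarrow> ('a \<Rightarrow> 'a \<Rightarrow> bool) \<Rightarrow> 'a \<Rightarrow> 'a set" where
  "nbhd V E v = {u \<in> V. E v u}"

definition is_partition :: "'a set set \<Rightarrow> 'a set \<Rightarrow> bool" where
  "is_partition P S \<longleftrightarrow> (\<forall>A\<in>P. A \<noteq> {}) \<and> \<Union>P = S
     \<and> (\<forall>A\<in>P. \<forall>B\<in>P. A \<noteq> B \<longrightarrow> A \<inter> B = {})"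

definition dominating :: "'b set \<Rightarrow> ('b \<Rightarrow> 'b \<Rightarrow> bool) \<Rightarrow> 'b set \<Rightarrow> bool" where
  "dominating V E D \<longleftrightarrow> D \<subseteq> V \<and> (\<forall>x \<in> V - D. \<exists>y \<in> D. E x y)"

definition domination_number :: "'b set \<Rightarrow> ('b \<Rightarrow> 'b \<Rightarrow> bool) \<Rightarrow> nat" where
  "domination_number V E = Min {card D | D. dominating V E D}"

text \<open>P-corona: vertex (v,1) is encoded as (v, None), vertex (v,A) as (v, Some A).\<close>
definition corona_vertices :: "'a set \<Rightarrow> ('a \<Rightarrow> 'a set set) \<Rightarrow> ('a \<times> 'a set option) set" where
  "corona_vertices V P = {(v, None) | v. v \<in> V} \<union> {(v, Some A) | v A. v \<in> V \<and> A \<in> P v}"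

definition corona_edge :: "'a set \<Rightarrow> ('a \<Rightarrow> 'a \<Rightarrow> bool) \<Rightarrow> ('a \<Rightarrow> 'a set set)
    \<Rightarrow> ('a \<times> 'a set option) \<Rightarrow> ('a \<times> 'a set option) \<Rightarrow> bool" where
  "corona_edge V E P x y \<longleftrightarrow>
     (\<exists>v A. v \<in> V \<and> A \<in> P v \<and>
        ((x = (v, None) \<and> y = (v, Some A)) \<or> (x = (v, Some A) \<and> y = (v, None))))
   \<or> (\<exists>u v A B. E u v \<and> A \<in> P v \<and> B \<in> P u \<and> u \<in> A \<and> v \<in> B
        \<and> x = (v, Some A) \<and> y = (u, Some B))"

end

theory Submission
  imports Defs
begin

text \<open>The closed neighbourhood of a root \<open>(v, None)\<close> of the corona consists of vertices with
  first coordinate \<open>v\<close>. So a dominating set meets the fibre over every \<open>v \<in> V\<close>, which forces at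
  least \<open>|V|\<close> elements, while the roots themselves form a dominating set of that size.\<close>

lemma domination_number_eqI:
  assumes "finite V" and "dominating V E D" and "card D = n"
    and "\<And>D'. dominating V E D' \<Longrightarrow> n \<le> card D'"
  shows "domination_number V E = n"
proof -
  have "{card D | D. dominating V E D} \<subseteq> card ` Pow V"
    by (auto simp: dominating_def)
  then have "finite {card D | D. dominating V E D}"
    using \<open>finite V\<close> by (meson finite_Pow_iff finite_imageI finite_subset)
  then show ?thesis
    unfolding domination_number_def using assms(2-4) by (intro Min_eqI) auto
qed

lemma corona_vertices_subset:
  assumes "\<forall>v \<in> V. \<forall>A \<in> P v. A \<subseteq> V"
  shows "corona_vertices V P \<subseteq> V \<times> insert None (Some ` Pow V)"
  using assms by (auto simp: corona_vertices_def)

lemma finite_corona_vertices: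
  assumes "finite V" and "\<forall>v \<in> V. \<forall>A \<in> P v. A \<subseteq> V"
  shows "finite (corona_vertices V P)"
  using finite_subset[OF corona_vertices_subset[OF assms(2)]] \<open>finite V\<close> by auto

lemma corona_edge_root_fst:
  assumes "corona_edge V E P (v, None) y"
  shows "fst y = v"
  using assms by (auto simp: corona_edge_def)

lemma dominating_corona_roots:
  "dominating (corona_vertices V P) (corona_edge V E P) ((\<lambda>v. (v, None)) ` V)"
  unfolding dominating_def
proof
  show "(\<lambda>v. (v, None)) ` V \<subseteq> corona_vertices V P"
    by (auto simp: corona_vertices_def)
  show "\<forall>x \<in> corona_vertices V P - (\<lambda>v. (v, None)) ` V.
          \<exists>y \<in> (\<lambda>v. (v, None)) ` V. corona_edge V E P x y"
  proof
    fix x assume "x \<in> corona_vertices V P - (\<lambda>v. (v, None)) ` V"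
    then obtain v A where "v \<in> V" "A \<in> P v" "x = (v, Some A)"
      by (auto simp: corona_vertices_def)
    then show "\<exists>y \<in> (\<lambda>v. (v, None)) ` V. corona_edge V E P x y"
      unfolding corona_edge_def by blast
  qed
qed

lemma dominating_corona_covers:
  assumes "dominating (corona_vertices V P) (corona_edge V E P) D"
  shows "V \<subseteq> fst ` D"
proof
  fix v assume "v \<in> V"
  show "v \<in> fst ` D"
  proof (cases "(v, None) \<in> D")
    case True
    then show ?thesis by force
  next
    case False
    have "(v, None) \<in> corona_vertices V P"
      using \<open>v \<in> V\<close> by (auto simp: corona_vertices_def)
    with False assms obtain y where "y \<in> D" "corona_edge V E P (v, None) y"
      unfolding dominating_def by blast
    then show ?thesis
      using corona_edge_root_fst rev_image_eqI by metis
  qed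
qed

lemma card_le_dominating_corona:
  assumes "finite V" and "\<forall>v \<in> V. \<forall>A \<in> P v. A \<subseteq> V"
    and "dominating (corona_vertices V P) (corona_edge V E P) D"
  shows "card V \<le> card D"
proof -
  have "finite D"
    using assms finite_corona_vertices finite_subset unfolding dominating_def by blast
  then have "card V \<le> card (fst ` D)"
    using card_mono dominating_corona_covers[OF assms(3)] by blast
  also have "\<dots> \<le> card D"
    using \<open>finite D\<close> by (rule card_image_le)
  finally show ?thesis .
qed

theorem lemma2p11:
  fixes V :: "'a set" and E :: "'a \<Rightarrow> 'a \<Rightarrow> bool" and P :: "'a \<Rightarrow> 'a set set"
  assumes "simple_graph V E"
    and "\<forall>v \<in> V. is_partition (P v) (nbhd V E v)"
  shows "domination_number (corona_vertices V P) (corona_edge V E P) = card V"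
proof -
  have "finite V"
    using assms(1) by (simp add: simple_graph_def)
  moreover have "\<forall>v \<in> V. \<forall>A \<in> P v. A \<subseteq> V"
    using assms(2) unfolding is_partition_def nbhd_def by blast
  moreover have "card ((\<lambda>v. (v, None)) ` V) = card V"
    by (rule card_image) (auto simp: inj_on_def)
  ultimately show ?thesis
    by (metis domination_number_eqI finite_corona_vertices dominating_corona_roots
        card_le_dominating_corona)
qed

end
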